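(* For every $n\in\mathbb{N}$, the pair $(\mathcal{A}_n,\mathcal{R}_{\mathrm{lps}_n})$ is a finite and complete presentation for the monoid $\mathrm{lps}_n$, and the pair $(\mathcal{A}_n,\mathcal{R}_{\mathrm{rps}_n})$ is a complete presentation for the monoid $\mathrm{rps}_n$.
   Context: Let $\mathcal{A}=\{1<2<3<\cdots\}$ be the positive integers viewed as a totally ordered alphabet and $\mathcal{A}_n=\{1<2<\cdots<n\}$. An lPS tableau is a finite (possibly empty) sequence of nonempty bottom-justified columns of boxes filled with elements of $\mathcal{A}$, such that the entries of each column are strictly decreasing from top to bottom and the bottom entries of the columns form a weakly increasing sequence from left to right. An rPS tableau is defined in the same way but with columns weakly decreasing from top to bottom and the bottom row strictly increasing from left to right. Right insertion of a symbol $a$ into an lPS tableau $B$: if $a$ is greater than or equal to every entry of the bottom row, append a new column consisting of $a$ at the right end; otherwise, let $z$ be the leftmost bottom-row entry with $z>a$ and put $a$ in a new box at the bottom of the column of $z$ (the previous entries of that column move up one box). Right insertion into an rPS tableau is the same except that a new column is created iff $a$ is strictly greater than every bottom-row entry, and otherwise $z$ is the leftmost bottom-row entry with $z\geq a$. For a word $w=w_1\cdots w_k$, $\mathfrak{R}_\ell(w)$ (resp. $\mathfrak{R}_r(w)$) is the tableau obtained by starting with the empty lPS (resp. rPS) tableau and right-inserting $w_1,\dots,w_k$ in this order. The monoid $\mathrm{lps}_n$ (resp. $\mathrm{rps}_n$) is the quotient of the free monoid $\mathcal{A}_n^*$ by the congruence $u\equiv v\iff \mathfrak{R}_\ell(u)=\mathfrak{R}_\ell(v)$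 (resp. $\mathfrak{R}_r(u)=\mathfrak{R}_r(v)$). $\mathcal{R}_{\mathrm{lps}_n}=\{(yux,yxu): m\geq 1,\ x,y,u_1,\dots,u_m\in\mathcal{A}_n,\ u=u_m\cdots u_1,\ x<y\leq u_1<\cdots<u_m\}$ and $\mathcal{R}_{\mathrm{rps}_n}=\{(yux,yxu): m\geq 1,\ x,y,u_1,\dots,u_m\in\mathcal{A}_n,\ u=u_m\cdots u_1,\ x\leq y< u_1\leq\cdots\leq u_m\}$. A presentation $(\Sigma,\mathcal{R})$ defines $M$ if $M\cong\Sigma^*/\mathcal{R}^\#$, where $\mathcal{R}^\#$ is the congruence generated by $\mathcal{R}$. Viewing $\mathcal{R}$ as a rewriting system with rules $r^+\to r^-$ for $(r^+,r^-)\in\mathcal{R}$ (applied to factors), the presentation is complete if the rewriting system is noetherian (no infinite chain of rewrites) and confluent. *)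

theory Defs
  imports Main
begin

abbreviation alph :: "nat \<Rightarrow> nat set" where "alph n \<equiv> {1..n}"

text \<open>A PS tableau is a list of columns (left to right). Each column is stored
  bottom-first, i.e. the head of a column is its bottom entry.\<close>
type_synonym tableau = "nat list list"

fun lps_ins :: "tableau \<Rightarrow> nat \<Rightarrow> tableau" where
  "lps_ins [] a = [[a]]"
| "lps_ins (c # cs) a = (if a < hd c then (a # c) # cs else c # lps_ins cs a)"

fun rps_ins :: "tableau \<Rightarrow> nat \<Rightarrow> tableau" where
  "rps_ins [] a = [[a]]"
| "rps_ins (c # cs) a = (if a \<le> hd c then (a # c) # cs else c # rps_ins cs a)"

definition Rl :: "nat list \<Rightarrow> tableau" where
  "Rl w = foldl lps_ins [] w"

definition Rr :: "nat list \<Rightarrow> tableau" where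
  "Rr w = foldl rps_ins [] w"

text \<open>The defining relations. The word u = u_m ... u_1 is the list us = [u_m,...,u_1],
  so u_1 = last us and u_1 < ... < u_m means us is strictly decreasing.\<close>
definition R_lps :: "nat \<Rightarrow> (nat list \<times> nat list) set" where
  "R_lps n = {(y # us @ [x], y # x # us) | x y us.
      us \<noteq> [] \<and> x \<in> alph n \<and> y \<in> alph n \<and> set us \<subseteq> alph n \<and>
      x < y \<and> y \<le> last us \<and> sorted_wrt (>) us}"

definition R_rps :: "nat \<Rightarrow> (nat list \<times> nat list) set" where
  "R_rps n = {(y # us @ [x], y # x # us) | x y us.
      us \<noteq> [] \<and> x \<in> alph n \<and> y \<in> alph n \<and> set us \<subseteq> alph n \<and>
      x \<le> y \<and> y < last us \<and> sorted_wrt (\<ge>) us}"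

definition rstep :: "'a set \<Rightarrow> ('a list \<times> 'a list) set \<Rightarrow> ('a list \<times> 'a list) set" where
  "rstep S R = {(u @ l @ v, u @ r @ v) | u l r v. (l, r) \<in> R \<and> u \<in> lists S \<and> v \<in> lists S}"

definition gen_cong :: "'a set \<Rightarrow> ('a list \<times> 'a list) set \<Rightarrow> ('a list \<times> 'a list) set" where
  "gen_cong S R = Id_on (lists S) \<union> (rstep S R \<union> (rstep S R)\<inverse>)\<^sup>+"

definition noetherian :: "('b \<times> 'b) set \<Rightarrow> bool" where
  "noetherian r \<longleftrightarrow> wf (r\<inverse>)"

definition confluent :: "('b \<times> 'b) set \<Rightarrow> bool" where
  "confluent r \<longleftrightarrow> (\<forall>a b c. (a, b) \<in> r\<^sup>* \<and> (a, c) \<in> r\<^sup>* \<longrightarrow>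
      (\<exists>d. (b, d) \<in> r\<^sup>* \<and> (c, d) \<in> r\<^sup>*))"

definition complete_pres :: "'a set \<Rightarrow> ('a list \<times> 'a list) set \<Rightarrow> bool" where
  "complete_pres S R \<longleftrightarrow> noetherian (rstep S R) \<and> confluent (rstep S R)"

text \<open>(S, R) presents the quotient of S* by the congruence induced by the map f
  (identity on generators): R# coincides with u ~ v iff f u = f v.\<close>
definition presents :: "'a set \<Rightarrow> ('a list \<times> 'a list) set \<Rightarrow> ('a list \<Rightarrow> 'b) \<Rightarrow> bool" where
  "presents S R f \<longleftrightarrow> (\<forall>u \<in> lists S. \<forall>v \<in> lists S. (u, v) \<in> gen_cong S R \<longleftrightarrow> f u = f v)"

end

theory Submission
  imports Defs
begin

text \<open>Both insertions are instances of one insertion parametrised by the comparison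
  P \<in> {(<), (\<le>)} deciding whether a letter goes under a column. A relation
  y u x = y x u holds in the monoid because, once y is inserted, x lands in the part of the
  tableau ending with the column of y, while every letter of u passes that part unchanged;
  so inserting x commutes with inserting u. Each rule moves a smaller letter to the left,
  so rewriting terminates in the length-lexicographic order. A word to which no rule
  applies is the column reading of its own tableau, since otherwise its last letter would
  go under the penultimate column and create a redex. Hence irreducible words are
  determined by their tableaux, which yields both confluence and the presentation.\<close>

section \<open>Rewriting on words\<close>

lemma rstep_in_lists:
  assumes "R \<subseteq> lists S \<times> lists S" and "(s, t) \<in> rstep S R"
  shows "s \<in> lists S \<and> t \<in> lists S"
  using assms unfolding rstep_def by force

lemma rtrancl_rstep_in_lists:
  assumes "R \<subseteq> lists S \<times> lists S" and "(s, t) \<in> (rstep S R)\<^sup>*" and "s \<in> lists S"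
  shows "t \<in> lists S"
  using assms(2,3) by induction (auto dest: rstep_in_lists[OF assms(1)])

lemma rstep_snoc:
  assumes "(w, t) \<in> rstep S R" and "a \<in> S"
  shows "(w @ [a], t @ [a]) \<in> rstep S R"
proof -
  obtain u l r v where "w = u @ l @ v" "t = u @ r @ v" "(l, r) \<in> R" "u \<in> lists S" "v \<in> lists S"
    using assms(1) unfolding rstep_def by blast
  then show ?thesis
    unfolding rstep_def using assms(2)
    by (intro CollectI exI[of _ u] exI[of _ l] exI[of _ r] exI[of _ "v @ [a]"]) auto
qed

lemma noetherian_rstep_if_lenlex_decreasing:
  assumes "wf r" and "\<And>l t. (l, t) \<in> R \<Longrightarrow> (t, l) \<in> lenlex r"
  shows "noetherian (rstep S R)"
proof -
  have "(rstep S R)\<inverse> \<subseteq> lenlex r"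
  proof
    fix p assume "p \<in> (rstep S R)\<inverse>"
    then obtain u l t v where p: "p = (u @ t @ v, u @ l @ v)" and "(l, t) \<in> R"
      unfolding rstep_def by blast
    then have "(t @ v, l @ v) \<in> lenlex r" using assms(2) lenlex_append1 by blast
    moreover have "irrefl r" using assms(1) by (simp add: irrefl_def)
    ultimately show "p \<in> lenlex r" using p by simp
  qed
  then show ?thesis unfolding noetherian_def using wf_subset[OF wf_lenlex[OF assms(1)]] by blast
qed

lemma noetherian_normal_form_exists:
  assumes "noetherian r"
  shows "\<exists>z. (w, z) \<in> r\<^sup>* \<and> (\<forall>t. (z, t) \<notin> r)"
  using assms[unfolded noetherian_def]
proof (induction w rule: wf_induct_rule)
  case (less w)
  show ?case
  proof (cases "\<exists>t. (w, t) \<in> r")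
    case True
    then obtain t z where "(w, t) \<in> r" "(t, z) \<in> r\<^sup>*" "\<forall>t. (z, t) \<notin> r" using less by blast
    then show ?thesis by (meson converse_rtrancl_into_rtrancl)
  qed blast
qed

text \<open>Confluence and the presentation property both follow once the normal forms of a
  terminating system are separated by an invariant f: words with the same image then
  rewrite to one and the same normal form.\<close>

context
  fixes S :: "'a set" and R :: "('a list \<times> 'a list) set" and f :: "'a list \<Rightarrow> 'b"
  assumes rules_in_lists: "R \<subseteq> lists S \<times> lists S"
    and noetherian: "noetherian (rstep S R)"
    and rstep_invariant: "\<And>s t. (s, t) \<in> rstep S R \<Longrightarrow> f s = f t"
    and normal_forms_separated: "\<And>u v. u \<in> lists S \<Longrightarrow> v \<in> lists S \<Longrightarrow>
          \<forall>t. (u, t) \<notin> rstep S R \<Longrightarrow> \<forall>t. (v, t) \<notin> rstep S R \<Longrightarrow> f u = f v \<Longrightarrow> u = v"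
begin

lemma rtrancl_rstep_invariant: "(s, t) \<in> (rstep S R)\<^sup>* \<Longrightarrow> f s = f t"
  by (induction rule: rtrancl_induct) (auto dest: rstep_invariant)

lemma joinable_if_same_image:
  assumes "u \<in> lists S" "v \<in> lists S" "f u = f v"
  shows "\<exists>z. (u, z) \<in> (rstep S R)\<^sup>* \<and> (v, z) \<in> (rstep S R)\<^sup>*"
proof -
  obtain u' where u': "(u, u') \<in> (rstep S R)\<^sup>*" "\<forall>t. (u', t) \<notin> rstep S R"
    using noetherian_normal_form_exists[OF noetherian] by blast
  obtain v' where v': "(v, v') \<in> (rstep S R)\<^sup>*" "\<forall>t. (v', t) \<notin> rstep S R"
    using noetherian_normal_form_exists[OF noetherian] by blast
  have "u' = v'"
    using normal_forms_separated[OF rtrancl_rstep_in_lists[OF rules_in_lists u'(1) assms(1)]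
        rtrancl_rstep_in_lists[OF rules_in_lists v'(1) assms(2)] u'(2) v'(2)]
      rtrancl_rstep_invariant[OF u'(1)] rtrancl_rstep_invariant[OF v'(1)] assms(3)
    by simp
  then show ?thesis using u' v' by blast
qed

lemma confluent_if_normal_forms_separated: "confluent (rstep S R)"
  unfolding confluent_def
proof (intro allI impI)
  fix a b c assume steps: "(a, b) \<in> (rstep S R)\<^sup>* \<and> (a, c) \<in> (rstep S R)\<^sup>*"
  show "\<exists>d. (b, d) \<in> (rstep S R)\<^sup>* \<and> (c, d) \<in> (rstep S R)\<^sup>*"
  proof (cases "a \<in> lists S")
    case True
    then show ?thesis
      using steps rtrancl_rstep_in_lists[OF rules_in_lists] rtrancl_rstep_invariant
      by (metis joinable_if_same_image)
  next
    case False
    then have "b = a" "c = a"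
      using steps by (metis converse_rtranclE rstep_in_lists[OF rules_in_lists])+
    then show ?thesis by blast
  qed
qed

lemma presents_if_normal_forms_separated: "presents S R f"
  unfolding presents_def gen_cong_def
proof (intro ballI iffI)
  have "(s, t) \<in> (rstep S R \<union> (rstep S R)\<inverse>)\<^sup>+ \<Longrightarrow> f s = f t" for s t
    by (induction rule: trancl_induct) (auto dest: rstep_invariant)
  then show "(u, v) \<in> Id_on (lists S) \<union> (rstep S R \<union> (rstep S R)\<inverse>)\<^sup>+ \<Longrightarrow> f u = f v" for u v
    by auto
next
  fix u v assume uv: "u \<in> lists S" "v \<in> lists S" "f u = f v"
  then obtain z where "(u, z) \<in> (rstep S R)\<^sup>*" "(v, z) \<in> (rstep S R)\<^sup>*"
    using joinable_if_same_image by blast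
  then have "(u, z) \<in> (rstep S R \<union> (rstep S R)\<inverse>)\<^sup>*" "(v, z) \<in> (rstep S R \<union> (rstep S R)\<inverse>)\<^sup>*"
    by (auto intro: rtrancl_mono[THEN subsetD])
  then have "(u, z) \<in> (rstep S R \<union> (rstep S R)\<inverse>)\<^sup>*" "(z, v) \<in> (rstep S R \<union> (rstep S R)\<inverse>)\<^sup>*"
    by (auto dest: rtrancl_converseI simp: converse_Un Un_commute)
  then have "(u, v) \<in> (rstep S R \<union> (rstep S R)\<inverse>)\<^sup>*" by (rule rtrancl_trans)
  then show "(u, v) \<in> Id_on (lists S) \<union> (rstep S R \<union> (rstep S R)\<inverse>)\<^sup>+"
    using uv by (auto simp: rtrancl_eq_or_trancl Id_on_def)
qed

end

section \<open>Insertion into PS tableaux\<close>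

locale ps_order =
  fixes P :: "nat \<Rightarrow> nat \<Rightarrow> bool"
  assumes less_imp_P: "x < y \<Longrightarrow> P x y"
    and P_imp_le: "P x y \<Longrightarrow> x \<le> y"
begin

lemma not_P_imp_le: "\<not> P x y \<Longrightarrow> y \<le> x"
  using less_imp_P by (meson not_le)

lemma P_le_trans: "P a b \<Longrightarrow> b \<le> c \<Longrightarrow> P a c"
  using P_imp_le[of a b] less_imp_P[of a c] by (cases "b = c") auto

lemma le_P_trans: "a \<le> b \<Longrightarrow> P b c \<Longrightarrow> P a c"
  using P_imp_le[of b c] less_imp_P[of a c] by (cases "a = b") auto

lemma P_trans: "P a b \<Longrightarrow> P b c \<Longrightarrow> P a c"
  using P_imp_le le_P_trans by blast

lemma not_P_le_trans: "\<not> P a b \<Longrightarrow> c \<le> b \<Longrightarrow> \<not> P a c"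
  using P_le_trans by blast

lemma P_not_P_imp_less: "P x y \<Longrightarrow> \<not> P a y \<Longrightarrow> x < a"
  using le_P_trans by (meson not_le)

text \<open>Right insertion: P a b means that a is placed under a column with bottom
  entry b; (<) gives lPS and (\<le>) rPS tableaux.\<close>

fun ins :: "tableau \<Rightarrow> nat \<Rightarrow> tableau" where
  "ins [] a = [[a]]"
| "ins (c # cs) a = (if P a (hd c) then (a # c) # cs else c # ins cs a)"

definition tab :: "nat list \<Rightarrow> tableau" where
  "tab w = foldl ins [] w"

definition is_tableau :: "tableau \<Rightarrow> bool" where
  "is_tableau T \<longleftrightarrow> (\<forall>c\<in>set T. c \<noteq> [] \<and> sorted_wrt P c) \<and> sorted_wrt (\<lambda>p q. \<not> P q p) (map hd T)"

definition reading :: "tableau \<Rightarrow> nat list" where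
  "reading T = concat (map rev T)"

definition rules :: "nat \<Rightarrow> (nat list \<times> nat list) set" where
  "rules n = {(y # us @ [x], y # x # us) | x y us.
      us \<noteq> [] \<and> x \<in> alph n \<and> y \<in> alph n \<and> set us \<subseteq> alph n \<and>
      P x y \<and> \<not> P (last us) y \<and> sorted_wrt (\<lambda>a b. P b a) us}"

lemma ins_append_if_not_placed:
  assumes "\<forall>c\<in>set T. \<not> P a (hd c)"
  shows "ins (T @ Q) a = T @ ins Q a"
  using assms by (induction T) auto

lemma foldl_ins_append_if_not_placed:
  assumes "\<forall>c\<in>set T. \<forall>a\<in>set w. \<not> P a (hd c)"
  shows "foldl ins (T @ Q) w = T @ foldl ins Q w"
  using assms by (induction w arbitrary: Q) (auto simp: ins_append_if_not_placed)

lemma ins_append_if_placed: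
  assumes "\<exists>c\<in>set T. P x (hd c)"
  shows "ins (T @ Q) x = ins T x @ Q"
  using assms by (induction T) auto

lemma hd_ins_subset: "set (map hd (ins T a)) \<subseteq> insert a (set (map hd T))"
  by (induction T) auto

lemma ins_splits_at_new_box:
  "\<exists>T' Q. ins T y = T' @ Q \<and> T' \<noteq> [] \<and> hd (last T') = y \<and> (\<forall>c\<in>set T'. hd c \<le> y)"
proof (induction T)
  case Nil
  show ?case by (intro exI[of _ "[[y]]"] exI[of _ "[]"]) auto
next
  case (Cons c cs)
  show ?case
  proof (cases "P y (hd c)")
    case True
    then show ?thesis by (intro exI[of _ "[y # c]"] exI[of _ cs]) auto
  next
    case False
    from Cons obtain T' Q where "ins cs y = T' @ Q" "T' \<noteq> []" "hd (last T') = y" "\<forall>c\<in>set T'. hd c \<le> y"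
      by blast
    with False not_P_imp_le show ?thesis by (intro exI[of _ "c # T'"] exI[of _ Q]) auto
  qed
qed

text \<open>The column receiving y is the rightmost column of T' and has bottom y, so x with
  P x y stays inside T' while the letters of u, which all fail to be placed
  under y, pass T' (and then also the changed T') untouched.\<close>

lemma foldl_ins_commute:
  assumes "P x y" and "\<forall>a\<in>set u. \<not> P a y"
  shows "foldl ins T (y # u @ [x]) = foldl ins T (y # x # u)"
proof -
  obtain T' Q where split: "ins T y = T' @ Q" "T' \<noteq> []" "hd (last T') = y" "\<forall>c\<in>set T'. hd c \<le> y"
    using ins_splits_at_new_box by blast
  have x_placed: "\<exists>c\<in>set T'. P x (hd c)"
    using split(2,3) assms(1) by (intro bexI[of _ "last T'"]) auto
  have u_passes: "\<forall>c\<in>set T''. \<forall>a\<in>set u. \<not> P a (hd c)" if "\<forall>c\<in>set T''. hd c \<le> y" for T''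
    using that assms(2) by (meson not_P_le_trans)
  have "\<forall>c\<in>set (ins T' x). hd c \<le> y"
    using split(4) P_imp_le[OF assms(1)] by (induction T') auto
  note u_passes_T' = u_passes[OF split(4)] and u_passes_ins = u_passes[OF this]
  have "foldl ins T (y # u @ [x]) = ins (T' @ foldl ins Q u) x"
    using split(1) foldl_ins_append_if_not_placed[OF u_passes_T'] by simp
  also have "\<dots> = ins T' x @ foldl ins Q u"
    using ins_append_if_placed[OF x_placed] .
  also have "\<dots> = foldl ins (ins T' x @ Q) u"
    using foldl_ins_append_if_not_placed[OF u_passes_ins] by simp
  also have "ins T' x @ Q = ins (ins T y) x"
    using split(1) ins_append_if_placed[OF x_placed] by simp
  finally show ?thesis by simp
qed

lemma not_P_of_sorted_last:
  assumes "sorted_wrt (\<lambda>a b. P b a) u" and "\<not> P (last u) y" and "a \<in> set u"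
  shows "\<not> P a y"
proof -
  have "u \<noteq> []" using assms(3) by auto
  then have u_eq: "u = butlast u @ [last u]" by simp
  then have "\<forall>a\<in>set (butlast u). P (last u) a"
    using assms(1) sorted_wrt_append[of _ "butlast u" "[last u]"] by simp
  then have "\<forall>a\<in>set (butlast u @ [last u]). \<not> P a y" using assms(2) P_trans by auto
  then have "\<forall>a\<in>set u. \<not> P a y" by (simp only: u_eq[symmetric])
  then show ?thesis using assms(3) by blast
qed

lemma rule_preserves_foldl_ins:
  assumes "(l, r) \<in> rules n"
  shows "foldl ins T l = foldl ins T r"
proof -
  obtain x y u where lr: "l = y # u @ [x]" "r = y # x # u" and
    rule: "P x y" "\<not> P (last u) y" "sorted_wrt (\<lambda>a b. P b a) u"
    using assms unfolding rules_def by blast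
  then have "\<forall>a\<in>set u. \<not> P a y" using not_P_of_sorted_last by blast
  then show ?thesis using foldl_ins_commute[OF rule(1)] lr by simp
qed

lemma rstep_preserves_tab: "(s, t) \<in> rstep S (rules n) \<Longrightarrow> tab s = tab t"
  unfolding rstep_def tab_def by (auto simp: rule_preserves_foldl_ins)

lemma is_tableau_ins:
  assumes "is_tableau T"
  shows "is_tableau (ins T a)"
  using assms
proof (induction T)
  case Nil
  then show ?case by (simp add: is_tableau_def)
next
  case (Cons c cs)
  have c: "c \<noteq> []" "sorted_wrt P c" and cs: "is_tableau cs"
    and later: "\<forall>q\<in>set (map hd cs). \<not> P q (hd c)"
    using Cons.prems by (auto simp: is_tableau_def)
  show ?case
  proof (cases "P a (hd c)")
    case True
    have "\<forall>b\<in>set c. P a b"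
    proof
      fix b assume "b \<in> set c"
      then have "b = hd c \<or> P (hd c) b" using c by (cases c) auto
      then show "P a b" using True P_trans by blast
    qed
    moreover have "\<forall>q\<in>set (map hd cs). \<not> P q a"
      using later P_imp_le[OF True] not_P_le_trans by blast
    ultimately show ?thesis using True c cs by (auto simp: is_tableau_def)
  next
    case False
    have "\<forall>q\<in>set (map hd (ins cs a)). \<not> P q (hd c)"
      using hd_ins_subset[of cs a] later False by blast
    then show ?thesis using False Cons.IH[OF cs] c by (auto simp: is_tableau_def)
  qed
qed

lemma is_tableau_tab: "is_tableau (tab w)"
proof -
  have foldl_ins: "is_tableau (foldl ins T w)" if "is_tableau T" for T
    using that by (induction w arbitrary: T) (auto intro: is_tableau_ins)
  have "is_tableau []" by (simp add: is_tableau_def)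
  then show ?thesis unfolding tab_def by (rule foldl_ins)
qed

lemma reading_ins_if_not_placed_before_last:
  assumes "\<forall>c\<in>set (butlast T). \<not> P a (hd c)"
  shows "reading (ins T a) = reading T @ [a]"
  using assms by (induction T) (auto simp: reading_def split: if_splits)

lemma rulesI:
  assumes "us \<noteq> []" "x \<in> alph n" "y \<in> alph n" "set us \<subseteq> alph n"
    "P x y" "\<not> P (last us) y" "sorted_wrt (\<lambda>a b. P b a) us"
  shows "(y # us @ [x], y # x # us) \<in> rules n"
  using assms unfolding rules_def by blast

text \<open>If a is placed under some column other than the last one, it is placed under the
  penultimate column c; the last column d then yields the redex hd c \<cdot> rev d \<cdot> a at the
  end of the reading.\<close>

lemma reducible_if_placed_before_last:
  assumes T: "is_tableau T" and "reading T \<in> lists (alph n)" and "a \<in> alph n"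
    and "\<exists>c\<in>set (butlast T). P a (hd c)"
  shows "\<exists>t. (reading T @ [a], t) \<in> rstep (alph n) (rules n)"
proof -
  obtain T1 d where T1: "T = T1 @ [d]" and placed: "\<exists>c\<in>set T1. P a (hd c)"
    using assms(4) by (cases T rule: rev_cases) auto
  then obtain T0 c where T0: "T1 = T0 @ [c]" by (cases T1 rule: rev_cases) auto
  have cd: "c \<noteq> []" "d \<noteq> []" "sorted_wrt P d"
    and bottoms: "sorted_wrt (\<lambda>p q. \<not> P q p) (map hd T0 @ [hd c, hd d])"
    using T unfolding T1 T0 is_tableau_def by auto
  obtain c' where c': "c' \<in> set T1" "P a (hd c')" using placed by blast
  have "P a (hd c)"
  proof (cases "c' = c")
    case False
    then have "\<not> P (hd c) (hd c')" using c'(1) bottoms unfolding T0 by (simp add: sorted_wrt_append)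
    then show ?thesis using c'(2) not_P_imp_le P_le_trans by blast
  qed (use c' in simp)
  moreover have "\<not> P (hd d) (hd c)" using bottoms by (simp add: sorted_wrt_append)
  moreover have "hd c \<in> alph n" "set (rev d) \<subseteq> alph n"
    using assms(2) hd_in_set[OF cd(1)] unfolding T1 T0 reading_def by auto
  ultimately have rule: "(hd c # rev d @ [a], hd c # a # rev d) \<in> rules n"
    using cd assms(3) by (intro rulesI) (auto simp: sorted_wrt_rev last_rev)
  have "reading T = (reading T0 @ rev (tl c)) @ (hd c # rev d)"
    using cd(1) unfolding T1 T0 reading_def by (cases c) auto
  then have "(reading T @ [a], (reading T0 @ rev (tl c)) @ (hd c # a # rev d) @ []) \<in> rstep (alph n) (rules n)"
    using rule assms(2) unfolding rstep_def
    by (intro CollectI exI[of _ "reading T0 @ rev (tl c)"] exI[of _ "hd c # rev d @ [a]"]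
        exI[of _ "hd c # a # rev d"] exI[of _ "[]"]) auto
  then show ?thesis by blast
qed

lemma reading_tab_if_irreducible:
  assumes "w \<in> lists (alph n)" and "\<forall>t. (w, t) \<notin> rstep (alph n) (rules n)"
  shows "reading (tab w) = w"
  using assms
proof (induction w rule: rev_induct)
  case Nil
  then show ?case by (simp add: tab_def reading_def)
next
  case (snoc a w)
  have w: "w \<in> lists (alph n)" and a: "a \<in> alph n" using snoc.prems(1) by auto
  have "\<forall>t. (w, t) \<notin> rstep (alph n) (rules n)"
    using snoc.prems(2) rstep_snoc[OF _ a] by blast
  then have IH: "reading (tab w) = w" using snoc.IH w by blast
  have "\<forall>c\<in>set (butlast (tab w)). \<not> P a (hd c)"
    using reducible_if_placed_before_last[OF is_tableau_tab, of w n a] IH w a snoc.prems(2) by auto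
  then show ?case
    using reading_ins_if_not_placed_before_last IH by (simp add: tab_def)
qed

lemma rule_lenlex_decreasing:
  assumes "(l, r) \<in> rules n"
  shows "(r, l) \<in> lenlex less_than"
proof -
  obtain x y us where lr: "l = y # us @ [x]" "r = y # x # us" and
    rule: "us \<noteq> []" "P x y" "\<not> P (last us) y" "sorted_wrt (\<lambda>a b. P b a) us"
    using assms unfolding rules_def by blast
  then obtain h u where us: "us = h # u" by (cases us) auto
  then have "\<not> P h y" using not_P_of_sorted_last[OF rule(4,3)] by simp
  then have "x < h" using P_not_P_imp_less[OF rule(2)] by blast
  then show ?thesis using lr us by (simp add: Cons_lenlex_iff)
qed

lemma rules_in_lists: "rules n \<subseteq> lists (alph n) \<times> lists (alph n)"
  unfolding rules_def by auto

lemma presents_tab_and_complete: "presents (alph n) (rules n) tab \<and> complete_pres (alph n) (rules n)"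
proof -
  have noeth: "noetherian (rstep (alph n) (rules n))"
    using noetherian_rstep_if_lenlex_decreasing[OF wf_less_than] rule_lenlex_decreasing by blast
  have separated: "u = v" if "u \<in> lists (alph n)" "v \<in> lists (alph n)"
      "\<forall>t. (u, t) \<notin> rstep (alph n) (rules n)" "\<forall>t. (v, t) \<notin> rstep (alph n) (rules n)" "tab u = tab v"
    for u v
    using reading_tab_if_irreducible that by metis
  have invariant: "tab s = tab t" if "(s, t) \<in> rstep (alph n) (rules n)" for s t
    using that by (rule rstep_preserves_tab)
  show ?thesis
    using presents_if_normal_forms_separated[where f = tab, OF rules_in_lists noeth invariant separated]
      confluent_if_normal_forms_separated[where f = tab, OF rules_in_lists noeth invariant separated]
      noeth unfolding complete_pres_def by blast
qed

end

section \<open>The lPS and rPS monoids\<close>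

interpretation lps: ps_order "(<)"
  by unfold_locales auto

interpretation rps: ps_order "(\<le>)"
  by unfold_locales auto

lemma Rl_eq_lps_tab: "Rl = lps.tab"
proof -
  have "lps_ins T a = lps.ins T a" for T a by (induction T) auto
  then have "lps_ins = lps.ins" by (intro ext)
  then show ?thesis unfolding Rl_def lps.tab_def by simp
qed

lemma Rr_eq_rps_tab: "Rr = rps.tab"
proof -
  have "rps_ins T a = rps.ins T a" for T a by (induction T) auto
  then have "rps_ins = rps.ins" by (intro ext)
  then show ?thesis unfolding Rr_def rps.tab_def by simp
qed

lemma R_lps_eq_lps_rules: "R_lps n = lps.rules n"
  unfolding R_lps_def lps.rules_def by (auto simp: not_less)

lemma R_rps_eq_rps_rules: "R_rps n = rps.rules n"
  unfolding R_rps_def rps.rules_def by (auto simp: not_le)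

text \<open>Finiteness holds only for lPS: there u is strictly decreasing, hence has at most
  n letters, whereas the rPS relations allow u = (y+1)\<dots>(y+1) of any length.\<close>

lemma finite_R_lps: "finite (R_lps n)"
proof -
  let ?words = "{us. set us \<subseteq> alph n \<and> length us \<le> n}"
  have "R_lps n \<subseteq> (\<lambda>(x, y, us). (y # us @ [x], y # x # us)) ` (alph n \<times> alph n \<times> ?words)"
  proof
    fix p assume "p \<in> R_lps n"
    then obtain x y us where p: "p = (y # us @ [x], y # x # us)" "x \<in> alph n" "y \<in> alph n"
      "set us \<subseteq> alph n" "sorted_wrt (>) us" unfolding R_lps_def by blast
    have "distinct us" using p(5) by (induction us) auto
    then have "length us = card (set us)" by (simp add: distinct_card)
    also have "\<dots> \<le> card (alph n)" using p(4) by (intro card_mono) auto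
    finally show "p \<in> (\<lambda>(x, y, us). (y # us @ [x], y # x # us)) ` (alph n \<times> alph n \<times> ?words)"
      using p by force
  qed
  moreover have "finite (alph n \<times> alph n \<times> ?words)"
    by (intro finite_cartesian_product finite_lists_length_le) auto
  ultimately show ?thesis by (meson finite_imageI finite_subset)
qed

theorem theorem5p5:
  fixes n :: nat
  shows "presents (alph n) (R_lps n) Rl \<and> finite (R_lps n) \<and> complete_pres (alph n) (R_lps n)
       \<and> presents (alph n) (R_rps n) Rr \<and> complete_pres (alph n) (R_rps n)"
  using lps.presents_tab_and_complete[of n] rps.presents_tab_and_complete[of n] finite_R_lps[of n]
  unfolding Rl_eq_lps_tab Rr_eq_rps_tab R_lps_eq_lps_rules R_rps_eq_rps_rules by blast

end
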